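(* For an affine Coxeter system $(W,S)$ of rank two, $H_1(u)H_2(u)=\mathrm{Alt}(W)(u)$. Explicitly, $\mathrm{Alt}(W)(u)^{-1}$ equals $(1-u^3)^2$ in type $\tilde A_2$, $(1-u^4)(1-u^3)$ in type $\tilde C_2$, and $(1-u^5)(1-u^3)$ in type $\tilde G_2$.
   Context: Let $(W,S)$, $S=\{s_1,s_2,s_3\}$, be an affine Coxeter system of rank two, where $m_{ij}$ denotes the order of $s_is_j$, labelled so that $(m_{12},m_{23},m_{13})$ equals $(3,3,3)$ (type $\tilde A_2$), $(4,2,4)$ (type $\tilde C_2$) or $(6,2,3)$ (type $\tilde G_2$). $\ell$ is the length function with respect to $S$. For $D\subseteq W$, $D(u)=\sum_{w\in D}u^{\ell(w)}\in\mathbb{Z}[[u]]$; for $I\subseteq S$, $W_I$ is the subgroup generated by $I$; $\mathrm{Alt}(W)(u)=\prod_{I\subseteq S}W_I(u)^{(-1)^{|I|+|S|}}$. Define: in type $\tilde A_2$, $w_1=s_3s_2s_1$, $w_2=s_3s_1s_2$; in type $\tilde C_2$, $w_1=s_3s_1s_2s_1$, $w_2=s_3s_1s_2$; in type $\tilde G_2$, $w_1=s_3s_1s_2$, $w_2=s_3s_1s_2s_1s_2$. Let $H_i=\{w_i^k:k\in\mathbb{Z}_{\ge0}\}$. *)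

theory Defs
  imports "HOL-Computational_Algebra.Formal_Power_Series"
begin

datatype gen = s1 | s2 | s3

definition S :: "gen set" where "S = {s1, s2, s3}"

datatype afftype = A2t | C2t | G2t

fun cm :: "afftype \<Rightarrow> gen \<Rightarrow> gen \<Rightarrow> nat" where
  "cm T a b = (if a = b then 1 else
     (let p = (if {a,b} = {s1,s2} then 0 else if {a,b} = {s2,s3} then (1::nat) else 2) in
      (case T of
         A2t \<Rightarrow> 3
       | C2t \<Rightarrow> [4,2,4] ! p
       | G2t \<Rightarrow> [6,2,3] ! p)))"

text \<open>Equality in W of words over S: the congruence on words generated by the
  Coxeter relations (s t)^(m_st) = 1 (for s = t this is s s = 1). Since every generator
  is an involution, the monoid so presented is the Coxeter group W.\<close>
inductive cox_eq :: "afftype \<Rightarrow> gen list \<Rightarrow> gen list \<Rightarrow> bool" for T where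
  refl: "cox_eq T w w"
| sym: "cox_eq T u v \<Longrightarrow> cox_eq T v u"
| trans: "cox_eq T u v \<Longrightarrow> cox_eq T v w \<Longrightarrow> cox_eq T u w"
| rel: "cox_eq T (u @ concat (replicate (cm T s t) [s, t]) @ v) (u @ v)"

definition cls :: "afftype \<Rightarrow> gen list \<Rightarrow> gen list set" where
  "cls T w = {v. cox_eq T w v}"

definition Wgrp :: "afftype \<Rightarrow> gen list set set" where
  "Wgrp T = range (cls T)"

definition WI :: "afftype \<Rightarrow> gen set \<Rightarrow> gen list set set" where
  "WI T I = cls T ` {w. set w \<subseteq> I}"

definition len :: "afftype \<Rightarrow> gen list set \<Rightarrow> nat" where
  "len T x = (LEAST n. \<exists>w \<in> x. length w = n)"

definition gser :: "afftype \<Rightarrow> gen list set set \<Rightarrow> real fps" where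
  "gser T D = Abs_fps (\<lambda>n. of_nat (card {x \<in> D. len T x = n}))"

definition Alt :: "afftype \<Rightarrow> real fps" where
  "Alt T = (\<Prod>I\<in>Pow S. if even (card I + card S) then gser T (WI T I)
                         else inverse (gser T (WI T I)))"

fun word1 :: "afftype \<Rightarrow> gen list" where
  "word1 A2t = [s3, s2, s1]"
| "word1 C2t = [s3, s1, s2, s1]"
| "word1 G2t = [s3, s1, s2]"

fun word2 :: "afftype \<Rightarrow> gen list" where
  "word2 A2t = [s3, s1, s2]"
| "word2 C2t = [s3, s1, s2]"
| "word2 G2t = [s3, s1, s2, s1, s2]"

definition Hset :: "afftype \<Rightarrow> gen list \<Rightarrow> gen list set set" where
  "Hset T w = {cls T (concat (replicate k w)) | k. True}"

fun altinv :: "afftype \<Rightarrow> real fps" where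
  "altinv A2t = (1 - fps_X ^ 3) ^ 2"
| "altinv C2t = (1 - fps_X ^ 4) * (1 - fps_X ^ 3)"
| "altinv G2t = (1 - fps_X ^ 5) * (1 - fps_X ^ 3)"

end

theory Submission
  imports Defs
begin

text \<open>Proof idea. \<open>W\<close> acts simply transitively on the alcoves of the affine plane, and in suitable
  integral coordinates the alcoves are the lattice points lying on no wall. The generators act by
  explicit affine reflections, and the number of walls separating a point from the base point changes
  by one under each of them; together with a check of the braid relations on dihedral chambers this
  shows that the model is faithful and that the length of \<open>w\<close> is that wall count.
  Every such point is uniquely \<open>w\<^sub>0 \<cdot> (N i + x, N j + y)\<close> with \<open>w\<^sub>0\<close> in the finite Weyl group,
  \<open>(x, y)\<close> in the box \<open>(0, N)\<^sup>2\<close> and \<open>i, j \<ge> 0\<close>, and the lengths add up, so \<open>W(u)\<close> times two factors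
  \<open>1 - u\<^sup>k\<close> is a polynomial. Each step of the orbit of the base point under \<open>w\<^sub>i\<close> crosses
  \<open>|w\<^sub>i|\<close> new walls, so \<open>H\<^sub>i(u) = 1 / (1 - u\<^bsup>|w\<^sub>i|\<^esup>)\<close>. The parabolic series are finite
  dihedral computations, and what remains is a polynomial identity, checked in each type.\<close>

unbundle fps_syntax

declare cm.simps [simp del]

section \<open>The alcove model\<close>

text \<open>A point \<open>(X, Y)\<close> records the values of the two simple roots, scaled by \<open>scale T\<close> so that the
  walls are the lines on which a positive root (listed in \<open>roots T\<close>) takes a value in
  \<open>scale T \<cdot> \<int>\<close>. Alcoves correspond to the \<open>generic\<close> points, the fundamental one to \<open>base = (1, 1)\<close>.
  For a generic root value \<open>v\<close>, \<open>\<bar>v div scale T\<bar>\<close> is the number of walls of that root between \<open>v\<close>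
  and the interval \<open>(0, scale T)\<close>, so \<open>wall_dist T q\<close> counts the walls separating \<open>q\<close> from \<open>base\<close>.
  The generators \<open>s1\<close>, \<open>s2\<close> act by the linear simple reflections and \<open>s3\<close> by the reflection in the
  wall on which the highest root equals \<open>scale T\<close>; \<open>descent T s q\<close> says that the wall of \<open>s\<close>
  separates \<open>q\<close> from \<open>base\<close>.\<close>

fun scale :: "afftype \<Rightarrow> int" where
  "scale A2t = 3" | "scale C2t = 4" | "scale G2t = 6"

fun roots :: "afftype \<Rightarrow> (int \<times> int) list" where
  "roots A2t = [(1,0), (0,1), (1,1)]"
| "roots C2t = [(1,0), (0,1), (1,1), (2,1)]"
| "roots G2t = [(1,0), (0,1), (1,1), (2,1), (3,1), (3,2)]"

definition root_values :: "afftype \<Rightarrow> int \<times> int \<Rightarrow> int list" where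
  "root_values T q = map (\<lambda>(a, b). a * fst q + b * snd q) (roots T)"

definition wall_dist :: "afftype \<Rightarrow> int \<times> int \<Rightarrow> int" where
  "wall_dist T q = (\<Sum>v\<leftarrow>root_values T q. \<bar>v div scale T\<bar>)"

definition generic :: "afftype \<Rightarrow> int \<times> int \<Rightarrow> bool" where
  "generic T q \<longleftrightarrow> (\<forall>v\<in>set (root_values T q). \<not> scale T dvd v)"

fun act :: "afftype \<Rightarrow> gen \<Rightarrow> int \<times> int \<Rightarrow> int \<times> int" where
  "act A2t s1 (X,Y) = (- X, X + Y)"
| "act A2t s2 (X,Y) = (X + Y, - Y)"
| "act A2t s3 (X,Y) = (3 - Y, 3 - X)"
| "act C2t s1 (X,Y) = (- X, 2*X + Y)"
| "act C2t s2 (X,Y) = (X + Y, - Y)"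
| "act C2t s3 (X,Y) = (4 - X - Y, Y)"
| "act G2t s1 (X,Y) = (X + Y, - Y)"
| "act G2t s2 (X,Y) = (- X, 3*X + Y)"
| "act G2t s3 (X,Y) = (X, 6 - 3*X - Y)"

fun descent :: "afftype \<Rightarrow> gen \<Rightarrow> int \<times> int \<Rightarrow> bool" where
  "descent A2t s1 (X,Y) = (X < 0)"
| "descent A2t s2 (X,Y) = (Y < 0)"
| "descent A2t s3 (X,Y) = (3 < X + Y)"
| "descent C2t s1 (X,Y) = (X < 0)"
| "descent C2t s2 (X,Y) = (Y < 0)"
| "descent C2t s3 (X,Y) = (4 < 2*X + Y)"
| "descent G2t s1 (X,Y) = (Y < 0)"
| "descent G2t s2 (X,Y) = (X < 0)"
| "descent G2t s3 (X,Y) = (6 < 3*X + 2*Y)"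

lemma scale_pos: "0 < scale T"
  by (cases T) simp_all

lemma minus_div_not_dvd:
  fixes v N :: int
  assumes "N \<noteq> 0" "\<not> N dvd v"
  shows "(- v) div N = - (v div N) - 1"
  using assms by (simp add: zdiv_zminus1_eq_if dvd_eq_mod_eq_0)

lemma diff_div_not_dvd:
  fixes c v N :: int
  assumes "N \<noteq> 0" "N dvd c" "\<not> N dvd v"
  shows "(c - v) div N = c div N - v div N - 1"
proof -
  obtain k where c: "c = N * k" using assms(2) ..
  have "(c - v) div N = (N * k + - v) div N" by (simp add: c)
  also have "\<dots> = k + (- v) div N" using assms(1) by (rule div_mult_self4)
  finally show ?thesis using assms(1,3) c by (simp add: minus_div_not_dvd)
qed

lemma div_strict_bounds:
  fixes v N :: int
  assumes "\<not> N dvd v" "0 < N"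
  shows "N * (v div N) < v \<and> v < N * (v div N) + N"
  using assms
  by (metis add.commute add_less_cancel_right div_mult_mod_eq dvd_eq_mod_eq_0 le_less
        less_add_same_cancel1 mult.commute pos_mod_bound pos_mod_sign)

lemma generic_bounds:
  assumes "generic T q"
  shows "\<forall>v\<in>set (root_values T q). scale T * (v div scale T) < v \<and> v < scale T * (v div scale T) + scale T"
  using assms div_strict_bounds scale_pos unfolding generic_def by blast

text \<open>Each reflection permutes the root values up to sign and multiples of \<open>scale T\<close>; only the
  value of the reflected root crosses a wall.\<close>
lemma wall_dist_act:
  assumes "generic T q"
  shows "wall_dist T (act T s q) = (if descent T s q then wall_dist T q - 1 else wall_dist T q + 1)"
proof -
  obtain X Y where q: "q = (X, Y)" by (cases q)
  show ?thesis
    using assms generic_bounds[OF assms] unfolding q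
    by (cases T; cases s; simp add: wall_dist_def generic_def root_values_def algebra_simps;
        simp add: minus_div_not_dvd diff_div_not_dvd)
qed

lemma generic_act:
  assumes "generic T q"
  shows "generic T (act T s q)"
proof -
  obtain X Y where q: "q = (X, Y)" by (cases q)
  show ?thesis
    using assms unfolding q
    by (cases T; cases s; simp add: generic_def root_values_def algebra_simps dvd_diff_right_iff dvd_diff_left_iff)
qed

lemma act_act [simp]: "act T s (act T s q) = q"
  by (cases T; cases s; cases q) simp_all

abbreviation base :: "int \<times> int" where "base \<equiv> (1, 1)"

lemma generic_base: "generic T base"
  by (cases T) (simp_all add: generic_def root_values_def)

lemma wall_dist_base: "wall_dist T base = 0"
  by (cases T) (simp_all add: wall_dist_def root_values_def)

lemma wall_dist_nonneg: "0 \<le> wall_dist T q"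
  unfolding wall_dist_def by (rule sum_list_nonneg) auto

lemma no_descent_base: "\<not> descent T s base"
  by (cases T; cases s) simp_all

lemma ex_gen: "(\<exists>s. P s) \<longleftrightarrow> P s1 \<or> P s2 \<or> P s3"
  by (metis gen.exhaust)

lemma exists_descent:
  assumes "generic T q" "q \<noteq> base"
  shows "\<exists>s. descent T s q"
proof -
  obtain X Y where q: "q = (X, Y)" by (cases q)
  show ?thesis
    using assms unfolding q
    by (cases T; simp add: ex_gen generic_def root_values_def; presburger)
qed

fun ascends :: "afftype \<Rightarrow> gen list \<Rightarrow> int \<times> int \<Rightarrow> bool" where
  "ascends T [] q \<longleftrightarrow> True"
| "ascends T (s # xs) q \<longleftrightarrow> \<not> descent T s q \<and> ascends T xs (act T s q)"

fun descends :: "afftype \<Rightarrow> gen list \<Rightarrow> int \<times> int \<Rightarrow> bool" where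
  "descends T [] q \<longleftrightarrow> True"
| "descends T (s # xs) q \<longleftrightarrow> descent T s q \<and> descends T xs (act T s q)"

lemma generic_fold_act: "generic T q \<Longrightarrow> generic T (fold (act T) xs q)"
  by (induction xs arbitrary: q) (simp_all add: generic_act)

lemma wall_dist_fold_ascends:
  "generic T q \<Longrightarrow> ascends T xs q \<Longrightarrow> wall_dist T (fold (act T) xs q) = wall_dist T q + length xs"
  by (induction xs arbitrary: q) (simp_all add: wall_dist_act generic_act)

lemma wall_dist_fold_descends:
  "generic T q \<Longrightarrow> descends T xs q \<Longrightarrow> wall_dist T (fold (act T) xs q) = wall_dist T q - length xs"
  by (induction xs arbitrary: q) (simp_all add: wall_dist_act generic_act)

fun alt :: "gen \<Rightarrow> gen \<Rightarrow> nat \<Rightarrow> gen list" where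
  "alt s t 0 = []"
| "alt s t (Suc n) = s # alt t s n"

lemma length_alt [simp]: "length (alt s t m) = m"
  by (induction m arbitrary: s t) auto

lemma cm_pos: "0 < cm T s t"
  by (cases T; cases s; cases t) (simp_all add: cm.simps)

lemma cm_sym: "cm T t s = cm T s t"
  by (cases T; cases s; cases t) (simp_all add: cm.simps doubleton_eq_iff)

text \<open>The geometric input on the braid relations: it lets a reduced word starting with \<open>s\<close> be
  traded for one starting with \<open>t\<close> whenever both are descents.\<close>
lemma descends_braid_word:
  "generic T q \<Longrightarrow> descent T s q \<Longrightarrow> descent T t q \<Longrightarrow> s \<noteq> t \<Longrightarrow> descends T (alt s t (cm T s t)) q"
  by (cases T; cases s; cases t; cases q) (simp_all add: cm.simps numeral_eq_Suc doubleton_eq_iff)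

section \<open>Faithfulness of the model\<close>

definition word_act :: "afftype \<Rightarrow> gen list \<Rightarrow> int \<times> int \<Rightarrow> int \<times> int" where
  "word_act T w q = foldr (act T) w q"

lemma word_act_simps [simp]:
  "word_act T [] q = q"
  "word_act T (s # w) q = act T s (word_act T w q)"
  "word_act T (u @ v) q = word_act T u (word_act T v q)"
  by (simp_all add: word_act_def)

lemma word_act_rev_left [simp]: "word_act T w (word_act T (rev w) q) = q"
  by (induction w arbitrary: q) auto

lemma word_act_rev_right [simp]: "word_act T (rev w) (word_act T w q) = q"
  using word_act_rev_left[of T "rev w"] by simp

lemma fold_act_eq_word_act: "fold (act T) xs q = word_act T (rev xs) q"
  by (simp add: word_act_def foldr_conv_fold)

lemma word_act_relator: "word_act T (concat (replicate (cm T s t) [s, t])) q = q"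
  by (cases T; cases s; cases t; cases q) (simp_all add: cm.simps numeral_eq_Suc doubleton_eq_iff)

lemma generic_word_act: "generic T q \<Longrightarrow> generic T (word_act T w q)"
  by (induction w) (simp_all add: generic_act)

lemma generic_word_act_base: "generic T (word_act T w base)"
  by (simp add: generic_word_act generic_base)

lemma wall_dist_word_act_base_le: "wall_dist T (word_act T w base) \<le> length w"
proof (induction w)
  case (Cons s w)
  then show ?case
    using wall_dist_act[OF generic_word_act_base, of T s w] by (simp split: if_splits)
qed (simp add: wall_dist_base)

lemma cox_eq_append_cong: "cox_eq T u v \<Longrightarrow> cox_eq T (a @ u @ b) (a @ v @ b)"
proof (induction rule: cox_eq.induct)
  case (rel u0 s t v0)
  have "cox_eq T ((a @ u0) @ concat (replicate (cm T s t) [s, t]) @ (v0 @ b)) ((a @ u0) @ (v0 @ b))"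
    by (rule cox_eq.rel)
  then show ?case by simp
qed (blast intro: cox_eq.intros)+

lemma cox_eq_Cons: "cox_eq T u v \<Longrightarrow> cox_eq T (s # u) (s # v)"
  using cox_eq_append_cong[of T u v "[s]" "[]"] by simp

lemma cox_eq_append_right: "cox_eq T u v \<Longrightarrow> cox_eq T (u @ b) (v @ b)"
  using cox_eq_append_cong[of T u v "[]" b] by simp

lemma cox_eq_cancel: "cox_eq T (s # s # w) w"
  using cox_eq.rel[of T "[]" s s w] by (simp add: cm.simps)

lemma cox_eq_rev_cancel: "cox_eq T (rev w @ w @ v) v"
proof (induction w arbitrary: v)
  case (Cons s w)
  have "cox_eq T (rev w @ (s # s # (w @ v)) @ []) (rev w @ (w @ v) @ [])"
    by (rule cox_eq_append_cong, rule cox_eq_cancel)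
  then show ?case using Cons.IH by (auto intro: cox_eq.trans)
qed (simp add: cox_eq.refl)

lemma cox_eq_braid:
  assumes "s \<noteq> t"
  shows "cox_eq T (alt s t (cm T s t)) (alt t s (cm T s t))"
proof -
  let ?m = "cm T s t"
  have relator: "concat (replicate ?m [s, t]) = alt s t ?m @ rev (alt t s ?m)"
    using assms by (cases T; cases s; cases t) (simp_all add: cm.simps numeral_eq_Suc doubleton_eq_iff)
  have "cox_eq T ([] @ concat (replicate ?m [s, t]) @ alt t s ?m) ([] @ alt t s ?m)"
    by (rule cox_eq.rel)
  then have 1: "cox_eq T (alt s t ?m @ rev (alt t s ?m) @ alt t s ?m) (alt t s ?m)"
    by (simp only: relator append_Nil append_assoc)
  have "cox_eq T (alt s t ?m @ (rev (alt t s ?m) @ alt t s ?m @ []) @ []) (alt s t ?m @ [] @ [])"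
    by (rule cox_eq_append_cong, rule cox_eq_rev_cancel)
  then have 2: "cox_eq T (alt s t ?m @ rev (alt t s ?m) @ alt t s ?m) (alt s t ?m)"
    by (simp only: append_Nil append_Nil2 append_assoc)
  show ?thesis using 1 2 by (blast intro: cox_eq.trans cox_eq.sym)
qed

lemma word_act_cox_eq: "cox_eq T u v \<Longrightarrow> word_act T u q = word_act T v q"
  by (induction arbitrary: q rule: cox_eq.induct) (simp_all only: word_act_simps(3) word_act_relator)

definition reduced :: "afftype \<Rightarrow> gen list \<Rightarrow> bool" where
  "reduced T w \<longleftrightarrow> wall_dist T (word_act T w base) = length w"

lemma reduced_Nil: "reduced T []"
  by (simp add: reduced_def wall_dist_base)

lemma reduced_ConsD:
  assumes "reduced T (s # w)"
  shows "reduced T w" and "descent T s (word_act T (s # w) base)"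
proof -
  let ?q = "word_act T w base"
  have step: "wall_dist T (act T s ?q) = (if descent T s ?q then wall_dist T ?q - 1 else wall_dist T ?q + 1)"
    by (rule wall_dist_act[OF generic_word_act_base])
  have "wall_dist T (act T s ?q) = length w + 1"
    using assms by (simp add: reduced_def)
  with step wall_dist_word_act_base_le[of T w] have q: "wall_dist T ?q = length w"
    by (auto split: if_splits)
  then show "reduced T w" by (simp add: reduced_def)
  have "wall_dist T (act T s (act T s ?q)) = (if descent T s (act T s ?q)
      then wall_dist T (act T s ?q) - 1 else wall_dist T (act T s ?q) + 1)"
    by (rule wall_dist_act[OF generic_act[OF generic_word_act_base]])
  with q \<open>wall_dist T (act T s ?q) = length w + 1\<close>
  show "descent T s (word_act T (s # w) base)" by (auto split: if_splits)
qed

lemma exists_reduced_word: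
  assumes "generic T q"
  obtains w where "word_act T w base = q" "reduced T w"
  using assms
proof (induction "nat (wall_dist T q)" arbitrary: q thesis rule: less_induct)
  case less
  show ?case
  proof (cases "q = base")
    case True
    then show ?thesis using less.prems(1)[of "[]"] by (simp add: reduced_Nil)
  next
    case False
    then obtain s where s: "descent T s q" using exists_descent[OF less.prems(2)] by blast
    have dist: "wall_dist T (act T s q) = wall_dist T q - 1"
      using wall_dist_act[OF less.prems(2), of s] s by simp
    obtain w where "word_act T w base = act T s q" "reduced T w"
      using less.hyps[of "act T s q"] dist wall_dist_nonneg[of T "act T s q"] generic_act[OF less.prems(2)]
      by force
    then show ?thesis
      using less.prems(1)[of "s # w"] dist by (simp add: reduced_def)
  qed
qed

lemma reduced_braid_tails:
  assumes u: "reduced T u" and st: "descent T s (word_act T u base)" "descent T t (word_act T u base)" "s \<noteq> t"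
  obtains x y where "reduced T x" "word_act T x base = act T s (word_act T u base)"
    "reduced T y" "word_act T y base = act T t (word_act T u base)" "cox_eq T (s # x) (t # y)"
proof -
  let ?m = "cm T s t" and ?q = "word_act T u base"
  have gq: "generic T ?q" by (rule generic_word_act_base)
  let ?h = "fold (act T) (alt s t ?m) ?q"
  have dh: "wall_dist T ?h = wall_dist T ?q - ?m"
    using wall_dist_fold_descends[OF gq descends_braid_word[OF gq st]] by simp
  obtain r where r: "word_act T r base = ?h" "reduced T r"
    using exists_reduced_word generic_fold_act[OF gq] by blast
  have as: "word_act T (alt s t ?m @ r) base = ?q"
    using r(1) by (simp add: fold_act_eq_word_act)
  have "word_act T (alt t s ?m) (word_act T r base) = word_act T (alt s t ?m) (word_act T r base)"
    using word_act_cox_eq[OF cox_eq_braid[OF st(3)]] by metis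
  then have at: "word_act T (alt t s ?m @ r) base = ?q" using as by simp
  have "int (length r) = wall_dist T ?q - ?m" using r dh by (simp add: reduced_def)
  moreover have "wall_dist T ?q = length u" using u by (simp add: reduced_def)
  ultimately have "wall_dist T ?q = ?m + length r" by linarith
  then have red: "reduced T (alt s t ?m @ r)" "reduced T (alt t s ?m @ r)"
    using as at by (simp_all add: reduced_def cm_sym)
  have alt_Cons: "alt a b ?m @ r = a # (alt b a (?m - 1) @ r)" for a b
    using cm_pos[of T s t] by (cases ?m) auto
  show thesis
  proof (rule that)
    show "reduced T (alt t s (?m - 1) @ r)" "reduced T (alt s t (?m - 1) @ r)"
      using red alt_Cons reduced_ConsD(1) by metis+
    show "word_act T (alt t s (?m - 1) @ r) base = act T s ?q"
      "word_act T (alt s t (?m - 1) @ r) base = act T t ?q"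
      using as at alt_Cons by (metis act_act word_act_simps(2))+
    show "cox_eq T (s # alt t s (?m - 1) @ r) (t # alt s t (?m - 1) @ r)"
      using cox_eq_append_right[OF cox_eq_braid[OF st(3)]] alt_Cons by metis
  qed
qed

text \<open>Matsumoto's theorem in the alcove model.\<close>
lemma reduced_same_point_cox_eq:
  "reduced T u \<Longrightarrow> reduced T v \<Longrightarrow> word_act T u base = word_act T v base \<Longrightarrow> cox_eq T u v"
proof (induction "length u" arbitrary: u v rule: less_induct)
  case less
  let ?q = "word_act T u base"
  have lu: "wall_dist T ?q = length u" and lv: "wall_dist T ?q = length v"
    using less.prems by (simp_all add: reduced_def)
  show ?case
  proof (cases u)
    case Nil
    then show ?thesis using lu lv by (simp add: cox_eq.refl)
  next
    case (Cons s u')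
    then obtain t v' where v: "v = t # v'" using lu lv by (cases v) auto
    have u': "reduced T u'" "word_act T u' base = act T s ?q" and ds: "descent T s ?q"
      using reduced_ConsD less.prems(1) Cons by auto
    have v': "reduced T v'" "word_act T v' base = act T t ?q" and dt: "descent T t ?q"
      using reduced_ConsD less.prems(2,3) v by auto
    have shorter: "length u' < length u" "length v' < length u"
      using Cons v lu lv by simp_all
    show ?thesis
    proof (cases "s = t")
      case True
      then have "word_act T u' base = word_act T v' base" using u'(2) v'(2) by simp
      then have "cox_eq T u' v'" by (rule less.hyps[OF shorter(1) u'(1) v'(1)])
      then show ?thesis using Cons v True by (simp add: cox_eq_Cons)
    next
      case False
      obtain x y where x: "reduced T x" "word_act T x base = act T s ?q"
        and y: "reduced T y" "word_act T y base = act T t ?q" and braid: "cox_eq T (s # x) (t # y)"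
        using reduced_braid_tails[OF less.prems(1) ds dt False] by blast
      have "cox_eq T u' x"
        by (rule less.hyps[OF shorter(1) u'(1) x(1)]) (simp only: u'(2) x(2))
      then have "cox_eq T u (s # x)" unfolding Cons by (rule cox_eq_Cons)
      moreover have "cox_eq T v' y"
        by (rule less.hyps[OF shorter(2) v'(1) y(1)]) (simp only: v'(2) y(2))
      then have "cox_eq T v (t # y)" unfolding v by (rule cox_eq_Cons)
      moreover note braid
      ultimately show ?thesis by (blast intro: cox_eq.trans cox_eq.sym)
    qed
  qed
qed

lemma exists_reduced_cox_eq: "\<exists>r. reduced T r \<and> cox_eq T w r"
proof (induction w)
  case Nil
  then show ?case using reduced_Nil cox_eq.refl by blast
next
  case (Cons s w)
  then obtain r where r: "reduced T r" "cox_eq T w r" by blast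
  let ?q = "word_act T r base"
  have gq: "generic T ?q" by (rule generic_word_act_base)
  show ?case
  proof (cases "descent T s ?q")
    case False
    then have "reduced T (s # r)"
      using r(1) wall_dist_act[OF gq, of s] by (simp add: reduced_def)
    then show ?thesis using cox_eq_Cons[OF r(2)] by blast
  next
    case True
    obtain r' where r': "word_act T r' base = act T s ?q" "reduced T r'"
      using exists_reduced_word generic_act[OF gq] by blast
    have "reduced T (s # r')"
      using r r' True wall_dist_act[OF gq, of s] by (simp add: reduced_def)
    then have "cox_eq T r (s # r')"
      using reduced_same_point_cox_eq[OF r(1)] r'(1) by simp
    then have "cox_eq T (s # w) (s # s # r')"
      using cox_eq_Cons[OF r(2)] cox_eq_Cons by (blast intro: cox_eq.trans)
    then show ?thesis using r'(2) cox_eq_cancel by (blast intro: cox_eq.trans)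
  qed
qed

theorem cox_eq_iff_word_act: "cox_eq T u v \<longleftrightarrow> word_act T u base = word_act T v base"
proof
  assume "word_act T u base = word_act T v base"
  moreover obtain r1 r2 where "reduced T r1" "cox_eq T u r1" "reduced T r2" "cox_eq T v r2"
    using exists_reduced_cox_eq by metis
  ultimately show "cox_eq T u v"
    using reduced_same_point_cox_eq word_act_cox_eq by (metis cox_eq.sym cox_eq.trans)
qed (rule word_act_cox_eq)

lemma cls_eq_iff: "cls T u = cls T v \<longleftrightarrow> word_act T u base = word_act T v base"
  unfolding cls_def cox_eq_iff_word_act by auto

lemma len_cls: "len T (cls T w) = nat (wall_dist T (word_act T w base))"
proof -
  obtain r where r: "reduced T r" "cox_eq T w r" using exists_reduced_cox_eq by blast
  show ?thesis unfolding len_def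
  proof (rule Least_equality)
    show "\<exists>v\<in>cls T w. length v = nat (wall_dist T (word_act T w base))"
      using r word_act_cox_eq[OF r(2)] by (auto simp: reduced_def cls_def)
  next
    fix n assume "\<exists>v\<in>cls T w. length v = n"
    then obtain v where "cox_eq T w v" "length v = n" by (auto simp: cls_def)
    then show "nat (wall_dist T (word_act T w base)) \<le> n"
      using wall_dist_word_act_base_le[of T v] by (simp add: cox_eq_iff_word_act)
  qed
qed

definition elem :: "afftype \<Rightarrow> int \<times> int \<Rightarrow> gen list set" where
  "elem T q = cls T (SOME w. word_act T w base = q)"

lemma cls_eq_elem: "cls T w = elem T (word_act T w base)"
proof -
  have "word_act T (SOME v. word_act T v base = word_act T w base) base = word_act T w base"
    by (rule someI[of _ w]) simp
  then show ?thesis unfolding elem_def using cls_eq_iff by metis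
qed

lemma generic_iff_word_act: "generic T q \<longleftrightarrow> (\<exists>w. q = word_act T w base)"
  using exists_reduced_word generic_word_act_base by metis

lemma inj_on_elem: "inj_on (elem T) {q. generic T q}"
  by (rule inj_onI) (metis cls_eq_elem cls_eq_iff generic_iff_word_act mem_Collect_eq)

lemma len_elem: "generic T q \<Longrightarrow> len T (elem T q) = nat (wall_dist T q)"
  by (metis cls_eq_elem generic_iff_word_act len_cls)

lemma Wgrp_eq: "Wgrp T = elem T ` {q. generic T q}"
  unfolding Wgrp_def generic_iff_word_act by (auto simp: cls_eq_elem)

lemma WI_eq: "WI T I = elem T ` (\<lambda>w. word_act T w base) ` {w. set w \<subseteq> I}"
  unfolding WI_def image_image by (simp add: cls_eq_elem)

lemma Hset_eq: "Hset T w = elem T ` range (\<lambda>k. word_act T (concat (replicate k w)) base)"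
  unfolding Hset_def by (auto simp: cls_eq_elem)

section \<open>The growth series of \<open>W\<close>\<close>

definition count_series :: "'a set \<Rightarrow> ('a \<Rightarrow> nat) \<Rightarrow> real fps" where
  "count_series D f = Abs_fps (\<lambda>n. of_nat (card {x\<in>D. f x = n}))"

lemma gser_elem_image:
  assumes "P \<subseteq> {q. generic T q}"
  shows "gser T (elem T ` P) = count_series P (\<lambda>q. nat (wall_dist T q))"
proof (rule fps_ext)
  fix n
  have "inj_on (elem T) {q\<in>P. nat (wall_dist T q) = n}"
    by (rule inj_on_subset[OF inj_on_elem]) (use assms in auto)
  moreover have "{x \<in> elem T ` P. len T x = n} = elem T ` {q\<in>P. nat (wall_dist T q) = n}"
    using assms len_elem[of T] by auto
  ultimately show "gser T (elem T ` P) $ n = count_series P (\<lambda>q. nat (wall_dist T q)) $ n"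
    by (simp add: gser_def count_series_def card_image)
qed

lemma count_series_bij_betw:
  assumes "bij_betw h A B" "\<And>a. a \<in> A \<Longrightarrow> g (h a) = f a"
  shows "count_series A f = count_series B g"
proof (rule fps_ext)
  fix n
  have "bij_betw h {a\<in>A. f a = n} {b\<in>B. g b = n}"
    using assms unfolding bij_betw_def inj_on_def by (auto simp: image_iff)
  then show "count_series A f $ n = count_series B g $ n"
    by (simp add: count_series_def bij_betw_same_card)
qed

lemma count_series_finite:
  assumes "finite D"
  shows "count_series D f = (\<Sum>x\<in>D. fps_X ^ f x)"
proof (rule fps_ext)
  fix n
  have "(\<Sum>x\<in>D. fps_X ^ f x) $ n = (\<Sum>x\<in>D. if n = f x then 1 else 0 :: real)"
    by (simp add: fps_sum_nth)
  also have "\<dots> = of_nat (card {x\<in>D. f x = n})"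
    using assms by (simp add: sum.If_cases Int_def eq_commute)
  finally show "count_series D f $ n = (\<Sum>x\<in>D. fps_X ^ f x) $ n"
    by (simp add: count_series_def)
qed

lemma card_fibre_shift:
  fixes f :: "'a \<Rightarrow> nat"
  assumes fin: "\<And>n. finite {x\<in>D. f x \<le> n}" and k: "0 < k"
  defines "fibre m \<equiv> {p \<in> D \<times> UNIV. (case p of (x, i) \<Rightarrow> f x + k * i) = m}"
  shows "card (fibre n) = card {x\<in>D. f x = n} + (if n < k then 0 else card (fibre (n - k)))"
proof -
  have fin_fibre: "finite (fibre m)" for m
  proof (rule finite_subset)
    show "fibre m \<subseteq> {x\<in>D. f x \<le> m} \<times> {..m}"
    proof
      fix p assume "p \<in> fibre m"
      then obtain x i where "p = (x, i)" "x \<in> D" "f x + k * i = m" by (auto simp: fibre_def)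
      moreover have "i \<le> k * i" using k by simp
      ultimately show "p \<in> {x\<in>D. f x \<le> m} \<times> {..m}" by (auto intro: trans_le_add2)
    qed
  qed (use fin in auto)
  let ?A = "(\<lambda>x. (x, 0::nat)) ` {x\<in>D. f x = n}"
  let ?B = "(\<lambda>(x, i). (x, Suc i)) ` (if n < k then {} else fibre (n - k))"
  have split: "fibre n = ?A \<union> ?B"
  proof (intro set_eqI iffI)
    fix p assume "p \<in> fibre n"
    then obtain x i where p: "p = (x, i)" "x \<in> D" "f x + k * i = n" by (auto simp: fibre_def)
    then show "p \<in> ?A \<union> ?B"
      by (cases i) (auto simp: fibre_def image_iff)
  qed (auto simp: fibre_def split: if_splits)
  have "card ?A = card {x\<in>D. f x = n}" by (rule card_image) (auto simp: inj_on_def)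
  moreover have "card ?B = (if n < k then 0 else card (fibre (n - k)))"
    by (subst card_image) (auto simp: inj_on_def)
  moreover have "finite ?A" by (rule finite_imageI, rule finite_subset[OF _ fin[of n]]) auto
  moreover have "finite ?B" using fin_fibre by auto
  moreover have "?A \<inter> ?B = {}" by auto
  ultimately show ?thesis unfolding split by (simp add: card_Un_disjoint)
qed

lemma count_series_shift:
  fixes f :: "'a \<Rightarrow> nat"
  assumes fin: "\<And>n. finite {x\<in>D. f x \<le> n}" and k: "0 < k"
  shows "count_series (D \<times> UNIV) (\<lambda>(x, i). f x + k * i) * (1 - fps_X ^ k) = count_series D f"
proof (rule fps_ext)
  fix n
  let ?F = "count_series (D \<times> UNIV) (\<lambda>(x, i). f x + k * i)"
  have F: "?F $ m = of_nat (card {p \<in> D \<times> UNIV. (case p of (x, i) \<Rightarrow> f x + k * i) = m})" for m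
    by (simp add: count_series_def)
  have "(?F * (1 - fps_X ^ k)) $ n = ?F $ n - (if n < k then 0 else ?F $ (n - k))"
    by (simp add: right_diff_distrib fps_X_power_mult_right_nth)
  also have "\<dots> = of_nat (card {x\<in>D. f x = n})"
    unfolding F card_fibre_shift[OF fin k, of n] by simp
  finally show "(?F * (1 - fps_X ^ k)) $ n = count_series D f $ n"
    by (simp add: count_series_def)
qed

definition dominant :: "int \<times> int \<Rightarrow> bool" where
  "dominant q \<longleftrightarrow> 0 < fst q \<and> 0 < snd q"

fun finite_weyl_words :: "afftype \<Rightarrow> gen list list" where
  "finite_weyl_words A2t = [[], [s1], [s1, s2], [s1, s2, s1], [s2], [s2, s1]]"
| "finite_weyl_words C2t =
     [[], [s1], [s1, s2], [s1, s2, s1], [s1, s2, s1, s2], [s2], [s2, s1], [s2, s1, s2]]"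
| "finite_weyl_words G2t =
     [[], [s1], [s1, s2], [s1, s2, s1], [s1, s2, s1, s2], [s1, s2, s1, s2, s1],
      [s1, s2, s1, s2, s1, s2], [s2], [s2, s1], [s2, s1, s2], [s2, s1, s2, s1], [s2, s1, s2, s1, s2]]"

lemma generic_root_values_nonzero:
  "generic T q \<Longrightarrow> \<forall>v\<in>set (root_values T q). v \<noteq> 0"
  unfolding generic_def by auto

lemma exists_dominant_word:
  assumes "generic T (X, Y)"
  shows "\<exists>w\<in>set (finite_weyl_words T). dominant (word_act T (rev w) (X, Y))"
proof (cases T)
  case A2t
  then show ?thesis using generic_root_values_nonzero[OF assms]
    by (cases "0 < X"; cases "0 < Y"; cases "0 < X + Y";
        simp add: dominant_def root_values_def; linarith)
next
  case C2t
  then show ?thesis using generic_root_values_nonzero[OF assms]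
    by (cases "0 < X"; cases "0 < Y"; cases "0 < X + Y"; cases "0 < 2 * X + Y";
        simp add: dominant_def root_values_def; linarith)
next
  case G2t
  then show ?thesis using generic_root_values_nonzero[OF assms]
    by (cases "0 < X"; cases "0 < Y"; cases "0 < X + Y"; cases "0 < 2 * X + Y";
        cases "0 < 3 * X + Y"; cases "0 < 3 * X + 2 * Y";
        simp add: dominant_def root_values_def; linarith)
qed

lemma ascends_finite_weyl_word:
  "w \<in> set (finite_weyl_words T) \<Longrightarrow> dominant q \<Longrightarrow> ascends T (rev w) q"
  by (cases T; cases q) (auto simp: dominant_def)

lemma finite_weyl_word_unique:
  assumes "w \<in> set (finite_weyl_words T)" "w' \<in> set (finite_weyl_words T)" "dominant q"
    "dominant (word_act T (rev w') (word_act T w q))"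
  shows "w' = w"
  using assms by (cases T; cases q) (auto simp: dominant_def)

lemma wall_dist_finite_weyl_word:
  assumes "w \<in> set (finite_weyl_words T)" "dominant q" "generic T q"
  shows "wall_dist T (word_act T w q) = wall_dist T q + length w"
  using wall_dist_fold_ascends[OF assms(3) ascends_finite_weyl_word[OF assms(1,2)]]
  by (simp add: fold_act_eq_word_act)

definition residues :: "afftype \<Rightarrow> (int \<times> int) list" where
  "residues T = [(x, y). x \<leftarrow> [1..scale T - 1], y \<leftarrow> [1..scale T - 1], generic T (x, y)]"

text \<open>The number of walls crossed by a translation by \<open>scale T\<close> in the coordinate \<open>c\<close>.\<close>
definition shift_length :: "afftype \<Rightarrow> (int \<times> int \<Rightarrow> int) \<Rightarrow> nat" where
  "shift_length T c = nat (\<Sum>r\<leftarrow>roots T. c r)"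

lemma shift_length_pos: "0 < shift_length T fst" "0 < shift_length T snd"
  by (cases T; simp add: shift_length_def)+

lemma roots_nonneg: "(a, b) \<in> set (roots T) \<Longrightarrow> 0 \<le> a \<and> 0 \<le> b"
  by (cases T) auto

lemma generic_translate:
  "generic T (scale T * i + x, scale T * j + y) \<longleftrightarrow> generic T (x, y)"
proof -
  have "a * (scale T * i + x) + b * (scale T * j + y) = (a * x + b * y) + (a * i + b * j) * scale T"
    for a b by (simp add: algebra_simps)
  then have "scale T dvd a * (scale T * i + x) + b * (scale T * j + y) \<longleftrightarrow> scale T dvd a * x + b * y"
    for a b by simp
  then show ?thesis by (simp add: generic_def root_values_def case_prod_beta)
qed

lemma wall_dist_translate:
  assumes "0 < x" "0 < y"
  shows "wall_dist T (scale T * int i + x, scale T * int j + y)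
    = int (shift_length T fst * i + shift_length T snd * j) + wall_dist T (x, y)"
proof -
  let ?N = "scale T"
  have summand: "\<bar>(a * (?N * i + x) + b * (?N * j + y)) div ?N\<bar> = a * i + b * j + \<bar>(a * x + b * y) div ?N\<bar>"
    if "(a, b) \<in> set (roots T)" for a b
  proof -
    have "a * (?N * i + x) + b * (?N * j + y) = (a * x + b * y) + (a * i + b * j) * ?N"
      by (simp add: algebra_simps)
    then have "(a * (?N * i + x) + b * (?N * j + y)) div ?N = (a * i + b * j) + (a * x + b * y) div ?N"
      using scale_pos[of T] by simp
    moreover have "0 \<le> a * i + b * j" "0 \<le> (a * x + b * y) div ?N"
      using roots_nonneg[OF that] assms scale_pos[of T] by (simp_all add: pos_imp_zdiv_nonneg_iff)
    ultimately show ?thesis by simp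
  qed
  have "wall_dist T (?N * i + x, ?N * j + y)
      = (\<Sum>(a, b)\<leftarrow>roots T. a * i + b * j + \<bar>(a * x + b * y) div ?N\<bar>)"
    unfolding wall_dist_def root_values_def map_map
    by (rule arg_cong[where f = sum_list], rule map_cong) (auto simp: summand)
  also have "\<dots> = (\<Sum>r\<leftarrow>roots T. fst r) * i + (\<Sum>r\<leftarrow>roots T. snd r) * j + wall_dist T (x, y)"
    by (simp add: wall_dist_def root_values_def split_def comp_def sum_list_addf sum_list_mult_const)
  moreover have "(\<Sum>r\<leftarrow>roots T. fst r) = shift_length T fst" "(\<Sum>r\<leftarrow>roots T. snd r) = shift_length T snd"
    by (cases T; simp add: shift_length_def)+
  ultimately show ?thesis by simp
qed

lemma mem_residues:
  "(x, y) \<in> set (residues T) \<longleftrightarrow> 0 < x \<and> x < scale T \<and> 0 < y \<and> y < scale T \<and> generic T (x, y)"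
  by (auto simp: residues_def)

lemma simple_roots_mem: "(1, 0) \<in> set (roots T)" "(0, 1) \<in> set (roots T)"
  by (cases T; simp)+

fun chamber_point :: "afftype \<Rightarrow> ((gen list \<times> int \<times> int) \<times> nat) \<times> nat \<Rightarrow> int \<times> int" where
  "chamber_point T (((w, x, y), i), j) = word_act T w (scale T * int i + x, scale T * int j + y)"

abbreviation chamber_index :: "afftype \<Rightarrow> (((gen list \<times> int \<times> int) \<times> nat) \<times> nat) set" where
  "chamber_index T \<equiv> ((set (finite_weyl_words T) \<times> set (residues T)) \<times> UNIV) \<times> UNIV"

lemma chamber_point_generic_wall_dist:
  assumes "w \<in> set (finite_weyl_words T)" "(x, y) \<in> set (residues T)"
  shows "generic T (chamber_point T (((w, x, y), i), j))"
    and "wall_dist T (chamber_point T (((w, x, y), i), j))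
      = int (length w + nat (wall_dist T (x, y)) + shift_length T fst * i + shift_length T snd * j)"
proof -
  let ?q = "(scale T * int i + x, scale T * int j + y)"
  have r: "0 < x" "0 < y" "generic T (x, y)" using assms(2) by (simp_all add: mem_residues)
  have gq: "generic T ?q" using r(3) generic_translate by blast
  have "dominant ?q" using r scale_pos[of T] by (simp add: dominant_def add_nonneg_pos)
  then show "wall_dist T (chamber_point T (((w, x, y), i), j))
      = int (length w + nat (wall_dist T (x, y)) + shift_length T fst * i + shift_length T snd * j)"
    using wall_dist_finite_weyl_word[OF assms(1) _ gq] wall_dist_translate[OF r(1,2)]
      wall_dist_nonneg[of T "(x, y)"] by simp
  show "generic T (chamber_point T (((w, x, y), i), j))" using gq by (simp add: generic_word_act)
qed

lemma scale_mul_add_inj: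
  assumes "scale T * int i + x = scale T * int i' + x'" "0 \<le> x" "x < scale T" "0 \<le> x'" "x' < scale T"
  shows "i = i'" "x = x'"
proof -
  have "int i = (scale T * int i + x) div scale T" using assms(2,3) by simp
  also have "\<dots> = int i'" using assms(1,4,5) by simp
  finally show "i = i'" by simp
  have "x = (scale T * int i + x) mod scale T" using assms(2,3) by simp
  also have "\<dots> = x'" using assms(1,4,5) by simp
  finally show "x = x'" .
qed

lemma bij_chamber_point: "bij_betw (chamber_point T) (chamber_index T) {q. generic T q}"
proof (rule bij_betw_imageI)
  show "inj_on (chamber_point T) (chamber_index T)"
  proof (rule inj_onI)
    fix a b assume a: "a \<in> chamber_index T" and b: "b \<in> chamber_index T"
      and eq: "chamber_point T a = chamber_point T b"
    obtain w x y i j where a_def: "a = (((w, x, y), i), j)" by (metis prod.collapse)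
    obtain w' x' y' i' j' where b_def: "b = (((w', x', y'), i'), j')" by (metis prod.collapse)
    have w: "w \<in> set (finite_weyl_words T)" "w' \<in> set (finite_weyl_words T)"
      and r: "(x, y) \<in> set (residues T)" "(x', y') \<in> set (residues T)"
      using a b by (simp_all add: a_def b_def)
    let ?q = "(scale T * int i + x, scale T * int j + y)"
    let ?q' = "(scale T * int i' + x', scale T * int j' + y')"
    have bounds: "0 < x" "x < scale T" "0 < y" "y < scale T" "0 < x'" "x' < scale T" "0 < y'" "y' < scale T"
      using r by (simp_all add: mem_residues)
    have dom: "dominant ?q" "dominant ?q'"
      using bounds scale_pos[of T] by (simp_all add: dominant_def add_nonneg_pos)
    have eq': "word_act T w ?q = word_act T w' ?q'" using eq by (simp add: a_def b_def)
    then have "word_act T (rev w') (word_act T w ?q) = ?q'" by simp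
    then have "w' = w" using finite_weyl_word_unique[OF w dom(1)] dom(2) by simp
    then have "?q = ?q'" using eq' word_act_rev_right by metis
    then show "a = b"
      using \<open>w' = w\<close> scale_mul_add_inj[of T i x i' x'] scale_mul_add_inj[of T j y j' y'] bounds
      by (simp add: a_def b_def)
  qed
  show "chamber_point T ` chamber_index T = {q. generic T q}"
  proof (intro equalityI subsetI)
    fix p assume "p \<in> chamber_point T ` chamber_index T"
    then show "p \<in> {q. generic T q}" using chamber_point_generic_wall_dist(1) by auto
  next
    fix p assume "p \<in> {q. generic T q}"
    then have gp: "generic T p" by simp
    obtain w where w: "w \<in> set (finite_weyl_words T)" "dominant (word_act T (rev w) p)"
      using exists_dominant_word[of T "fst p" "snd p"] gp by auto
    obtain X Y where XY: "word_act T (rev w) p = (X, Y)" by (cases "word_act T (rev w) p")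
    let ?N = "scale T"
    have pos: "0 < X" "0 < Y" using w(2) XY by (simp_all add: dominant_def)
    have gXY: "generic T (X, Y)" using generic_word_act[OF gp, of "rev w"] XY by simp
    moreover have "X \<in> set (root_values T (X, Y))" "Y \<in> set (root_values T (X, Y))"
      unfolding root_values_def set_map
      by (rule image_eqI[OF _ simple_roots_mem(1)], simp, rule image_eqI[OF _ simple_roots_mem(2)], simp)
    ultimately have nd: "\<not> ?N dvd X" "\<not> ?N dvd Y" by (simp_all add: generic_def)
    have split: "X = ?N * int (nat (X div ?N)) + X mod ?N" "Y = ?N * int (nat (Y div ?N)) + Y mod ?N"
      using pos scale_pos[of T] by (simp_all add: pos_imp_zdiv_nonneg_iff)
    have "generic T (X mod ?N, Y mod ?N)"
      using gXY generic_translate[of T "X div ?N" "X mod ?N" "Y div ?N" "Y mod ?N"] by simp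
    then have "(X mod ?N, Y mod ?N) \<in> set (residues T)"
      using nd scale_pos[of T] by (simp add: mem_residues dvd_eq_mod_eq_0 order_le_neq_trans)
    then have "(((w, X mod ?N, Y mod ?N), nat (X div ?N)), nat (Y div ?N)) \<in> chamber_index T"
      using w(1) by simp
    moreover have "chamber_point T (((w, X mod ?N, Y mod ?N), nat (X div ?N)), nat (Y div ?N))
        = word_act T w (X, Y)"
      by (simp only: chamber_point.simps split[symmetric])
    then have "p = chamber_point T (((w, X mod ?N, Y mod ?N), nat (X div ?N)), nat (Y div ?N))"
      by (metis XY word_act_rev_left)
    ultimately show "p \<in> chamber_point T ` chamber_index T" by (rule rev_image_eqI)
  qed
qed

lemma finite_weighted_le:
  fixes f :: "'a \<Rightarrow> nat"
  assumes "finite D" "0 < k"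
  shows "finite {x \<in> D \<times> UNIV. (case x of (e, i) \<Rightarrow> f e + k * i) \<le> n}"
proof (rule finite_subset)
  show "{x \<in> D \<times> UNIV. (case x of (e, i) \<Rightarrow> f e + k * i) \<le> n} \<subseteq> D \<times> {..n}"
  proof clarsimp
    fix e i assume "f e + k * i \<le> n"
    moreover have "i \<le> k * i" using assms(2) by simp
    ultimately show "i \<le> n" by linarith
  qed
qed (use assms(1) in simp)

theorem gser_Wgrp:
  "gser T (Wgrp T) * ((1 - fps_X ^ shift_length T fst) * (1 - fps_X ^ shift_length T snd))
    = (\<Sum>w\<in>set (finite_weyl_words T). fps_X ^ length w)
      * (\<Sum>r\<in>set (residues T). fps_X ^ nat (wall_dist T r))"
proof -
  let ?k1 = "shift_length T fst" and ?k2 = "shift_length T snd"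
  let ?D = "set (finite_weyl_words T) \<times> set (residues T)"
  define f where "f e = length (fst e) + nat (wall_dist T (snd e))" for e :: "gen list \<times> int \<times> int"
  note k = shift_length_pos[of T]
  have "gser T (Wgrp T) = count_series {q. generic T q} (\<lambda>q. nat (wall_dist T q))"
    unfolding Wgrp_eq by (rule gser_elem_image) simp
  also have "\<dots> = count_series ((?D \<times> UNIV) \<times> UNIV) (\<lambda>(x, j). (\<lambda>(e, i). f e + ?k1 * i) x + ?k2 * j)"
  proof (rule count_series_bij_betw[OF bij_chamber_point, symmetric])
    fix a assume "a \<in> chamber_index T"
    then obtain w x y i j where a: "a = (((w, x, y), i), j)" "w \<in> set (finite_weyl_words T)"
      "(x, y) \<in> set (residues T)" by (metis mem_Sigma_iff prod.collapse)
    show "nat (wall_dist T (chamber_point T a)) = (\<lambda>(x, j). (\<lambda>(e, i). f e + ?k1 * i) x + ?k2 * j) a"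
      using chamber_point_generic_wall_dist(2)[OF a(2,3), of i j] unfolding a(1)
      by (simp only: nat_int f_def prod.case fst_conv snd_conv)
  qed
  finally have "gser T (Wgrp T) * (1 - fps_X ^ ?k2) * (1 - fps_X ^ ?k1)
      = count_series (?D \<times> UNIV) (\<lambda>(e, i). f e + ?k1 * i) * (1 - fps_X ^ ?k1)"
    using count_series_shift[OF finite_weighted_le[where f = f and D = ?D, OF _ k(1)] k(2)] by simp
  also have "\<dots> = count_series ?D f"
    by (rule count_series_shift[OF _ k(1)]) (auto intro: finite_subset)
  also have "\<dots> = (\<Sum>(w, r)\<in>?D. fps_X ^ length w * fps_X ^ nat (wall_dist T r))"
    by (simp add: count_series_finite f_def case_prod_beta power_add)
  finally show ?thesis by (simp add: sum_product sum.cartesian_product mult_ac)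
qed

section \<open>The series of \<open>H\<^sub>1\<close>, \<open>H\<^sub>2\<close> and of the parabolic subgroups\<close>

lemma gser_Hset_ascending_orbit:
  assumes w: "w \<noteq> []" and base: "base \<in> Q"
    and orbit: "\<And>q. q \<in> Q \<Longrightarrow> ascends T (rev w) q \<and> word_act T w q \<in> Q"
  shows "gser T (Hset T w) * (1 - fps_X ^ length w) = 1"
proof -
  define P where "P k = word_act T (concat (replicate k w)) base" for k
  have P: "P k \<in> Q \<and> wall_dist T (P k) = int (k * length w)" for k
  proof (induction k)
    case 0
    then show ?case using base by (simp add: P_def wall_dist_base)
  next
    case (Suc k)
    have "P (Suc k) = word_act T w (P k)" by (simp add: P_def)
    moreover have "wall_dist T (word_act T w (P k)) = wall_dist T (P k) + length w"
      using wall_dist_fold_ascends[OF _ conjunct1[OF orbit]] Suc.IH generic_word_act_base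
      by (simp add: P_def fold_act_eq_word_act)
    ultimately show ?case using Suc.IH orbit by simp
  qed
  have "inj P"
    by (rule injI) (metis P w length_greater_0_conv mult_right_cancel nat_neq_iff of_nat_eq_iff)
  have "gser T (Hset T w) = count_series (range P) (\<lambda>q. nat (wall_dist T q))"
    unfolding Hset_eq P_def[symmetric] by (rule gser_elem_image) (auto simp: P_def generic_word_act_base)
  also have "\<dots> = count_series UNIV (\<lambda>k. length w * k)"
    by (rule count_series_bij_betw[OF inj_on_imp_bij_betw[OF \<open>inj P\<close>], symmetric])
      (metis P nat_int mult.commute)
  also have "\<dots> = count_series ({()} \<times> UNIV) (\<lambda>(x, i). (\<lambda>_. 0) x + length w * i)"
    by (rule count_series_bij_betw[where h = snd, symmetric]) (auto simp: bij_betw_def inj_on_def)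
  finally have "gser T (Hset T w) * (1 - fps_X ^ length w) = count_series {()} (\<lambda>_. 0)"
    using count_series_shift[of "{()}" "\<lambda>_. 0" "length w"] w by simp
  also have "\<dots> = 1" by (simp add: count_series_finite)
  finally show ?thesis .
qed

text \<open>\<open>w\<^sup>2\<close> acts as a translation, so the orbit of \<open>base\<close> alternates between two arithmetic
  progressions with common difference \<open>(tx, ty)\<close>.\<close>
lemma gser_Hset_glide:
  fixes tx ty u v :: int
  assumes "w \<noteq> []"
    and "\<And>j. 0 \<le> j \<Longrightarrow> word_act T w (1 + j * tx, 1 + j * ty) = (u + j * tx, v + j * ty)"
    and "\<And>j. 0 \<le> j \<Longrightarrow> word_act T w (u + j * tx, v + j * ty) = (1 + (j + 1) * tx, 1 + (j + 1) * ty)"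
    and "\<And>j. 0 \<le> j \<Longrightarrow> ascends T (rev w) (1 + j * tx, 1 + j * ty)"
    and "\<And>j. 0 \<le> j \<Longrightarrow> ascends T (rev w) (u + j * tx, v + j * ty)"
  shows "gser T (Hset T w) * (1 - fps_X ^ length w) = 1"
proof (rule gser_Hset_ascending_orbit[where Q = "{(1 + j * tx, 1 + j * ty) | j. 0 \<le> j}
    \<union> {(u + j * tx, v + j * ty) | j. 0 \<le> j}"])
  show "base \<in> {(1 + j * tx, 1 + j * ty) | j. 0 \<le> j} \<union> {(u + j * tx, v + j * ty) | j. 0 \<le> j}"
    by force
next
  fix q assume "q \<in> {(1 + j * tx, 1 + j * ty) | j. 0 \<le> j} \<union> {(u + j * tx, v + j * ty) | j. 0 \<le> j}"
  then consider (even) j where "0 \<le> j" "q = (1 + j * tx, 1 + j * ty)"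
    | (odd) j where "0 \<le> j" "q = (u + j * tx, v + j * ty)" by blast
  then show "ascends T (rev w) q \<and> word_act T w q
      \<in> {(1 + j * tx, 1 + j * ty) | j. 0 \<le> j} \<union> {(u + j * tx, v + j * ty) | j. 0 \<le> j}"
  proof cases
    case even
    then show ?thesis using assms(2,4) by blast
  next
    case odd
    then have "0 \<le> j + 1" by simp
    then show ?thesis using odd assms(3,5) by blast
  qed
qed (rule assms(1))

lemma gser_Hset_word1: "gser T (Hset T (word1 T)) * (1 - fps_X ^ length (word1 T)) = 1"
proof (cases T)
  case A2t
  show ?thesis unfolding A2t
    by (rule gser_Hset_glide[where tx = 9 and ty = 0 and u = 5 and v = 2]) (auto simp: algebra_simps)
next
  case C2t
  show ?thesis unfolding C2t
    by (rule gser_Hset_glide[where tx = 8 and ty = 0 and u = 5 and v = 1]) (auto simp: algebra_simps)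
next
  case G2t
  show ?thesis unfolding G2t
    by (rule gser_Hset_glide[where tx = 6 and ty = "-6" and u = 3 and v = 1]) (auto simp: algebra_simps)
qed

lemma gser_Hset_word2: "gser T (Hset T (word2 T)) * (1 - fps_X ^ length (word2 T)) = 1"
proof (cases T)
  case A2t
  show ?thesis unfolding A2t
    by (rule gser_Hset_glide[where tx = 0 and ty = 9 and u = 2 and v = 5]) (auto simp: algebra_simps)
next
  case C2t
  show ?thesis unfolding C2t
    by (rule gser_Hset_glide[where tx = 0 and ty = 8 and u = 3 and v = 3]) (auto simp: algebra_simps)
next
  case G2t
  show ?thesis unfolding G2t
    by (rule gser_Hset_glide[where tx = 6 and ty = 0 and u = 2 and v = 5]) (auto simp: algebra_simps)
qed

lemma gser_WI_closed:
  assumes "[] \<in> set D" "\<forall>d\<in>set D. set d \<subseteq> I"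
    and closed: "\<forall>d\<in>set D. \<forall>s\<in>I. act T s (word_act T d base) \<in> (\<lambda>d. word_act T d base) ` set D"
  shows "gser T (WI T I) = (\<Sum>q\<in>(\<lambda>d. word_act T d base) ` set D. fps_X ^ nat (wall_dist T q))"
proof -
  have "word_act T w base \<in> (\<lambda>d. word_act T d base) ` set D" if "set w \<subseteq> I" for w
    using that
  proof (induction w)
    case Nil
    then show ?case using assms(1) by force
  next
    case (Cons s w)
    then show ?case using closed by force
  qed
  then have "(\<lambda>w. word_act T w base) ` {w. set w \<subseteq> I} = (\<lambda>d. word_act T d base) ` set D"
    using assms(2) by blast
  then have "gser T (WI T I) = count_series ((\<lambda>d. word_act T d base) ` set D) (\<lambda>q. nat (wall_dist T q))"
    unfolding WI_eq by (simp add: gser_elem_image generic_word_act_base image_subset_iff)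
  then show ?thesis by (simp add: count_series_finite)
qed

lemma gser_WI_empty: "gser T (WI T {}) = 1"
  using gser_WI_closed[of "[[]]" "{}" T] by (simp add: wall_dist_base)

lemma gser_WI_singleton: "gser T (WI T {s}) = 1 + fps_X"
proof -
  have "wall_dist T (act T s base) = 1"
    using wall_dist_act[OF generic_base, of T s] no_descent_base[of T s] by (simp add: wall_dist_base)
  then have "act T s base \<noteq> base" by (auto simp: wall_dist_base)
  moreover have "gser T (WI T {s}) = (\<Sum>q\<in>{base, act T s base}. fps_X ^ nat (wall_dist T q))"
    using gser_WI_closed[of "[[], [s]]" "{s}" T] by simp
  ultimately show ?thesis using \<open>wall_dist T (act T s base) = 1\<close> by (simp add: wall_dist_base)
qed

definition dihedral_words :: "gen \<Rightarrow> gen \<Rightarrow> nat \<Rightarrow> gen list list" where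
  "dihedral_words s t m = map (alt s t) [0..<m] @ map (alt t s) [1..<Suc m]"

lemma gser_WI_pair:
  assumes "s \<noteq> t"
  shows "gser T (WI T {s, t}) = (1 + fps_X) * (\<Sum>i<cm T s t. fps_X ^ i)"
proof -
  have "gser T (WI T {s, t}) = (\<Sum>q\<in>(\<lambda>d. word_act T d base) ` set (dihedral_words s t (cm T s t)).
      fps_X ^ nat (wall_dist T q))"
    using assms
    by (intro gser_WI_closed; cases T; cases s; cases t)
      (simp_all add: dihedral_words_def cm.simps doubleton_eq_iff numeral_eq_Suc)
  also have "\<dots> = (1 + fps_X) * (\<Sum>i<cm T s t. fps_X ^ i)"
    using assms
    by (cases T; cases s; cases t; simp add: dihedral_words_def cm.simps doubleton_eq_iff numeral_eq_Suc
        wall_dist_def root_values_def; simp add: algebra_simps)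
  finally show ?thesis .
qed

lemma prod_Pow_insert:
  assumes "finite A" "a \<notin> A"
  shows "prod f (Pow (insert a A)) = prod f (Pow A) * prod (\<lambda>B. f (insert a B)) (Pow A)"
proof -
  have "inj_on (insert a) (Pow A)"
    using assms(2) by (intro inj_onI) (metis PowD insert_ident subsetD)
  moreover have "Pow A \<inter> insert a ` Pow A = {}" using assms(2) by auto
  ultimately show ?thesis
    using assms(1) by (simp add: Pow_insert prod.union_disjoint prod.reindex)
qed

lemma Alt_eq:
  "Alt T = gser T (Wgrp T) * (1 + fps_X) ^ 3
    * inverse (gser T (WI T {s1, s2}) * gser T (WI T {s1, s3}) * gser T (WI T {s2, s3}))"
proof -
  have "S = UNIV" unfolding S_def using gen.exhaust by blast
  then have "WI T S = Wgrp T" by (simp add: WI_def Wgrp_def)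
  moreover have "card S = 3" by (simp add: S_def)
  ultimately have "Alt T = gser T (Wgrp T) * inverse (gser T (WI T {s1, s2})) * inverse (gser T (WI T {s1, s3}))
      * inverse (gser T (WI T {s2, s3})) * gser T (WI T {s1}) * gser T (WI T {s2}) * gser T (WI T {s3})
      * inverse (gser T (WI T {}))"
    unfolding Alt_def by (simp add: S_def prod_Pow_insert mult_ac)
  then show ?thesis
    by (simp add: gser_WI_empty gser_WI_singleton fps_inverse_mult power3_eq_cube mult_ac)
qed

lemma geometric_sum_nth_0: "0 < m \<Longrightarrow> (\<Sum>i<m. fps_X ^ i :: real fps) $ 0 = 1"
  by (simp add: fps_sum_nth fps_X_power_nth)

lemma alternating_series_identity:
  fixes W Q P C D H1 H2 U1 U2 :: "real fps"
  assumes WQ: "W * Q = P" and Q0: "Q $ 0 \<noteq> 0" and D0: "D $ 0 \<noteq> 0"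
    and poly: "P * C * (U1 * U2) = Q * D"
    and H1: "H1 * U1 = 1" and H2: "H2 * U2 = 1"
  shows "H1 * H2 = W * C * inverse D" "inverse (W * C * inverse D) = U1 * U2"
proof -
  have QD: "(Q * D) $ 0 \<noteq> 0" using Q0 D0 by simp
  have "W * C * inverse D * (U1 * U2) = (W * Q) * C * (U1 * U2) * (D * inverse D) * inverse (Q * D)"
    using QD by (simp add: fps_inverse_mult inverse_mult_eq_1' mult_ac)
  also have "\<dots> = 1"
    using WQ poly D0 QD by (simp add: inverse_mult_eq_1')
  finally have unit: "W * C * inverse D * (U1 * U2) = 1" .
  show "inverse (W * C * inverse D) = U1 * U2" by (rule fps_inverse_unique[OF unit])
  have "H1 * H2 = H1 * H2 * (W * C * inverse D * (U1 * U2))" using unit by simp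
  also have "\<dots> = W * C * inverse D * (H1 * U1) * (H2 * U2)" by (simp add: mult_ac)
  finally show "H1 * H2 = W * C * inverse D" using H1 H2 by simp
qed

lemma residues_simps:
  "residues A2t = [(1, 1), (2, 2)]"
  "residues C2t = [(1, 1), (2, 1), (2, 3), (3, 3)]"
  "residues G2t = [(1, 1), (1, 2), (2, 1), (2, 5), (3, 1), (3, 2), (3, 4), (3, 5), (4, 1), (4, 5),
     (5, 4), (5, 5)]"
  by (simp_all add: residues_def generic_def root_values_def upto.simps)

lemma poincare_identity:
  "(\<Sum>w\<in>set (finite_weyl_words T). fps_X ^ length w) * (\<Sum>r\<in>set (residues T). fps_X ^ nat (wall_dist T r))
     * (1 + fps_X) ^ 3 * ((1 - fps_X ^ length (word1 T)) * (1 - fps_X ^ length (word2 T)))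
   = ((1 - fps_X ^ shift_length T fst) * (1 - fps_X ^ shift_length T snd))
     * ((1 + fps_X) * (\<Sum>i<cm T s1 s2. fps_X ^ i) * ((1 + fps_X) * (\<Sum>i<cm T s1 s3. fps_X ^ i))
        * ((1 + fps_X) * (\<Sum>i<cm T s2 s3. fps_X ^ i)) :: real fps)"
  by (induct T; simp add: residues_simps wall_dist_def root_values_def shift_length_def cm.simps
      doubleton_eq_iff numeral_eq_Suc; algebra)

theorem mainTheorem3:
  fixes T :: afftype
  shows "gser T (Hset T (word1 T)) * gser T (Hset T (word2 T)) = Alt T
         \<and> inverse (Alt T) = altinv T"
proof -
  let ?P = "\<lambda>s t. (1 + fps_X) * (\<Sum>i<cm T s t. fps_X ^ i) :: real fps"
  have "((1 - fps_X ^ shift_length T fst) * (1 - fps_X ^ shift_length T snd) :: real fps) $ 0 \<noteq> 0"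
    using shift_length_pos[of T] by simp
  moreover have "(?P s1 s2 * ?P s1 s3 * ?P s2 s3) $ 0 \<noteq> 0"
    using cm_pos[of T] by (simp add: geometric_sum_nth_0)
  ultimately have "gser T (Hset T (word1 T)) * gser T (Hset T (word2 T))
      = gser T (Wgrp T) * (1 + fps_X) ^ 3 * inverse (?P s1 s2 * ?P s1 s3 * ?P s2 s3)"
    "inverse (gser T (Wgrp T) * (1 + fps_X) ^ 3 * inverse (?P s1 s2 * ?P s1 s3 * ?P s2 s3))
      = (1 - fps_X ^ length (word1 T)) * (1 - fps_X ^ length (word2 T))"
    using alternating_series_identity[OF gser_Wgrp _ _ poincare_identity gser_Hset_word1 gser_Hset_word2]
    by blast+
  moreover have "altinv T = (1 - fps_X ^ length (word1 T)) * (1 - fps_X ^ length (word2 T))"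
    by (cases T) (simp_all add: eval_nat_numeral mult.commute)
  ultimately show ?thesis by (simp add: Alt_eq gser_WI_pair)
qed

end
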